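(* Let $S,C,D,\Delta\ge1$, $\mathcal{X}\subseteq\mathbb{R}^D$ nonempty convex compact, and $f_h$, $h=1,\dots,C$, convex continuously differentiable with gradients $g_h$ satisfying $\|g_h(x)\|\le L_h$ on $\mathcal{X}$. Suppose the weights $W_{i,k}[J,h]\ge0$ are nonnegative and satisfy SLC with constant $M>0$, the server graph is complete (consensus step $x^I_{0,k+1}=\frac1S\sum_{J=1}^S x^J_{\Delta,k}$), all servers start from the same point $x^J_{0,0}=x_{0,0}\in\mathcal{X}$, and the step sizes satisfy $\alpha_k>0$, $\lim_{k\to\infty}\alpha_k=0$ and $\sum_{k=0}^\infty\alpha_k=\infty$. Let $x_{0,k}$ denote the common value of $x^J_{0,k}$ over $J$. Then $$\lim_{k\to\infty}\mathrm{dist}(x_{0,k},\mathcal{X}^* )=0\quad\text{and}\quad\lim_{k\to\infty}f(x_{0,k})=f^*.$$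
   Context: $\mathcal{P}_{\mathcal{X}}$ is Euclidean projection onto $\mathcal{X}$; $f=\sum_{h=1}^Cf_h$, $f^*=\min_{x\in\mathcal{X}}f(x)$, $\mathcal{X}^*=\{x\in\mathcal{X}:f(x)=f^*\}$, $\mathrm{dist}(x,\mathcal{X}^* )=\inf_{x^*\in\mathcal{X}^*}\|x-x^*\|$ (Euclidean norm). Weight matrices $W_{i,k}\in\mathbb{R}^{S\times C}$ ($0\le i\le\Delta-1$, $k\ge0$). Symmetric Learning Condition (SLC): there is $M>0$ with $\sum_{i=1}^{\Delta}\sum_{J=1}^S W_{i-1,k}[J,h]=M$ for all $k\ge0$ and all $h$. Iteration: for each $k\ge0$ and $i=1,\dots,\Delta$, $x^J_{i,k}=\mathcal{P}_{\mathcal{X}}\big[x^J_{i-1,k}-\alpha_k\sum_{h=1}^C W_{i-1,k}[J,h]\,g_h(x^J_{i-1,k})\big]$, followed by the consensus step. *)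

theory Defs
  imports "HOL-Analysis.Analysis"
begin

definition total_obj :: "nat \<Rightarrow> (nat \<Rightarrow> 'a \<Rightarrow> real) \<Rightarrow> 'a \<Rightarrow> real" where
  "total_obj C f x = (\<Sum>h<C. f h x)"

definition opt_val :: "'a set \<Rightarrow> ('a \<Rightarrow> real) \<Rightarrow> real" where
  "opt_val X F = Inf (F ` X)"

definition opt_set :: "'a set \<Rightarrow> ('a \<Rightarrow> real) \<Rightarrow> 'a set" where
  "opt_set X F = {x \<in> X. F x = opt_val X F}"

end

theory Submission
  imports Defs
begin

text \<open>
  Every server starts round \<open>k\<close> at the same point \<open>z k\<close>, since consensus averages over the complete
  graph. During a round a server drifts at most \<open>\<Delta> \<alpha> k B\<close> away from \<open>z k\<close>, so convexity and the
  gradient bounds give, for every \<open>q \<in> X\<close>,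
  \<open>|x\<^sup>J\<^sub>\<Delta>\<^sub>,\<^sub>k - q|\<^sup>2 \<le> |z k - q|\<^sup>2 - 2 \<alpha> k (\<Sum>i h. W\<^sub>i\<^sub>,\<^sub>k[J,h] (f\<^sub>h (z k) - f\<^sub>h q)) + K \<alpha> k\<^sup>2\<close>.
  Averaging over the servers (\<open>|\<cdot>|\<^sup>2\<close> is convex) and the symmetric learning condition turn this into
  \<open>|z (k+1) - q|\<^sup>2 \<le> |z k - q|\<^sup>2 - (2M/S) \<alpha> k (f (z k) - f q) + K \<alpha> k\<^sup>2\<close>. Taking for \<open>q\<close> a point
  of \<open>X\<^sup>*\<close> nearest to \<open>z k\<close> yields a perturbed descent inequality for \<open>dist(z k, X\<^sup>*)\<^sup>2\<close>. By
  compactness \<open>f - f\<^sup>*\<close> is bounded away from zero outside every neighbourhood of \<open>X\<^sup>*\<close>, so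
  \<open>\<Sum> \<alpha> = \<infinity>\<close> and \<open>\<alpha> \<longlonglongrightarrow> 0\<close> force the distance to zero; uniform continuity of \<open>f\<close> on the
  compact set \<open>X\<close> then gives \<open>f (z k) \<longlonglongrightarrow> f\<^sup>*\<close>.
\<close>

lemma convex_on_above_gradient:
  fixes f :: "'a::real_inner \<Rightarrow> real"
  assumes convex: "convex_on UNIV f" and deriv: "(f has_derivative (\<lambda>v. f' \<bullet> v)) (at p)"
  shows "f p + f' \<bullet> (y - p) \<le> f y"
proof -
  define \<phi> where "\<phi> t = f (p + t *\<^sub>R (y - p))" for t :: real
  have line: "((\<lambda>t::real. p + t *\<^sub>R (y - p)) has_derivative (\<lambda>t. t *\<^sub>R (y - p))) (at 0)"
    by (auto intro!: derivative_eq_intros)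
  have "((\<lambda>t. f (p + t *\<^sub>R (y - p))) has_derivative (\<lambda>t. f' \<bullet> (t *\<^sub>R (y - p)))) (at 0)"
    using has_derivative_compose[OF line, of f "\<lambda>v. f' \<bullet> v"] deriv by (simp add: o_def)
  then have "(\<phi> has_field_derivative (f' \<bullet> (y - p))) (at 0)"
    unfolding has_field_derivative_def \<phi>_def by (rule has_derivative_eq_rhs) (auto simp: fun_eq_iff)
  moreover have "convex_on UNIV \<phi>"
  proof (rule convex_onI)
    fix t s1 s2 :: real assume "0 < t" "t < 1"
    then show "\<phi> ((1 - t) *\<^sub>R s1 + t *\<^sub>R s2) \<le> (1 - t) * \<phi> s1 + t * \<phi> s2"
      using convex_onD[OF convex, of t "p + s1 *\<^sub>R (y - p)" "p + s2 *\<^sub>R (y - p)"]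
      by (simp add: \<phi>_def algebra_simps)
  qed simp
  ultimately have "\<phi> 1 - \<phi> 0 \<ge> f' \<bullet> (y - p) * (1 - 0)"
    by (intro convex_on_imp_above_tangent[where A = UNIV]) auto
  then show ?thesis by (simp add: \<phi>_def)
qed

lemma convex_on_norm_power2: "convex_on UNIV (\<lambda>x::'a::real_normed_vector. (norm x)\<^sup>2)"
proof (rule convex_onI)
  fix t :: real and x y :: 'a assume t: "0 < t" "t < 1"
  have "norm ((1 - t) *\<^sub>R x + t *\<^sub>R y) \<le> (1 - t) * norm x + t * norm y"
    using norm_triangle_ineq[of "(1 - t) *\<^sub>R x" "t *\<^sub>R y"] t by simp
  then have "(norm ((1 - t) *\<^sub>R x + t *\<^sub>R y))\<^sup>2 \<le> ((1 - t) * norm x + t * norm y)\<^sup>2"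
    by (rule power_mono) simp
  also have "\<dots> \<le> (1 - t) * (norm x)\<^sup>2 + t * (norm y)\<^sup>2"
    using convex_onD[OF convex_power2, of t "norm x" "norm y"] t by simp
  finally show "(norm ((1 - t) *\<^sub>R x + t *\<^sub>R y))\<^sup>2 \<le> (1 - t) * (norm x)\<^sup>2 + t * (norm y)\<^sup>2" .
qed simp

lemma norm_average_minus_power2_le:
  fixes y :: "nat \<Rightarrow> 'a::real_normed_vector"
  assumes "0 < n"
  shows "(norm ((1 / real n) *\<^sub>R (\<Sum>j<n. y j) - q))\<^sup>2 \<le> (1 / real n) * (\<Sum>j<n. (norm (y j - q))\<^sup>2)"
proof -
  have "(1 / real n) *\<^sub>R (\<Sum>j<n. y j) - q = (\<Sum>j<n. (1 / real n) *\<^sub>R (y j - q))"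
    using assms by (simp add: scaleR_sum_right sum_subtractf scaleR_diff_right sum_constant_scaleR)
  moreover have "(norm (\<Sum>j<n. (1 / real n) *\<^sub>R (y j - q)))\<^sup>2 \<le> (\<Sum>j<n. (1 / real n) * (norm (y j - q))\<^sup>2)"
    by (rule convex_on_sum[OF _ _ convex_on_norm_power2]) (use assms in auto)
  ultimately show ?thesis by (simp add: sum_distrib_left)
qed

lemma dist_closest_point_le:
  fixes X :: "'a::euclidean_space set"
  assumes "convex X" "closed X" "X \<noteq> {}" "q \<in> X"
  shows "dist (closest_point X u) q \<le> dist u q"
  using closest_point_lipschitz[OF assms(1-3), of u q] closest_point_self[OF assms(4)] by simp

lemma gradient_at_shifted_point_ge:
  assumes above_gradient: "\<And>u v. f u + g u \<bullet> (v - u) \<le> f v" and "norm (g p) \<le> L"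
  shows "f p - f q - L * norm (u - p) \<le> g u \<bullet> (u - q)"
proof -
  have "g p \<bullet> (p - u) \<le> L * norm (u - p)"
    using norm_cauchy_schwarz[of "g p" "p - u"] mult_right_mono[OF assms(2) norm_ge_zero, of "p - u"]
    by (simp add: norm_minus_commute)
  moreover have "g p \<bullet> (u - p) = - (g p \<bullet> (p - u))" "g u \<bullet> (q - u) = - (g u \<bullet> (u - q))"
    by (simp_all add: inner_diff_right)
  ultimately show ?thesis
    using above_gradient[of p u] above_gradient[of u q] by linarith
qed

context
  fixes X :: "'a::euclidean_space set" and y v :: "nat \<Rightarrow> 'a" and a :: real and n :: nat
  assumes X: "convex X" "closed X" "X \<noteq> {}"
    and start_in_set: "y 0 \<in> X"
    and projected_step: "\<And>i. i < n \<Longrightarrow> y (Suc i) = closest_point X (y i - a *\<^sub>R v i)"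
begin

lemma projected_steps_in_set: "i \<le> n \<Longrightarrow> y i \<in> X"
  by (cases i) (use start_in_set projected_step closest_point_in_set X in auto)

lemma projected_step_dist_le: "i < n \<Longrightarrow> q \<in> X \<Longrightarrow> dist (y (Suc i)) q \<le> norm (y i - q - a *\<^sub>R v i)"
  using dist_closest_point_le[OF X, of q "y i - a *\<^sub>R v i"] projected_step
  by (simp add: dist_norm algebra_simps)

context
  fixes B :: real
  assumes step_size_nonneg: "0 \<le> a" and direction_bound: "\<And>i. i < n \<Longrightarrow> norm (v i) \<le> B"
begin

lemma projected_steps_drift: "i \<le> n \<Longrightarrow> norm (y i - y 0) \<le> i * a * B"
proof (induction i)
  case (Suc i)
  have "norm (y (Suc i) - y i) \<le> norm (y i - y i - a *\<^sub>R v i)"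
    using projected_step_dist_le[of i "y i"] projected_steps_in_set[of i] Suc.prems
    by (simp add: dist_norm)
  also have "\<dots> \<le> a * B"
    using direction_bound[of i] step_size_nonneg Suc.prems by (simp add: mult_left_mono)
  finally show ?case
    using Suc norm_triangle_ineq[of "y (Suc i) - y i" "y i - y 0"] by (simp add: algebra_simps)
qed simp

lemma projected_steps_dist_power2_le:
  assumes "q \<in> X" and progress: "\<And>i. i < n \<Longrightarrow> s i \<le> v i \<bullet> (y i - q)"
  shows "(norm (y n - q))\<^sup>2 \<le> (norm (y 0 - q))\<^sup>2 - 2 * a * (\<Sum>i<n. s i) + n * a\<^sup>2 * B\<^sup>2"
proof -
  have step: "(norm (y (Suc i) - q))\<^sup>2 \<le> (norm (y i - q))\<^sup>2 - 2 * a * s i + a\<^sup>2 * B\<^sup>2" if "i < n" for i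
  proof -
    have "(norm (y (Suc i) - q))\<^sup>2 \<le> (norm (y i - q - a *\<^sub>R v i))\<^sup>2"
      using projected_step_dist_le[OF that assms(1)] by (simp add: dist_norm power_mono)
    also have "\<dots> = (norm (y i - q))\<^sup>2 - 2 * a * (v i \<bullet> (y i - q)) + a\<^sup>2 * (norm (v i))\<^sup>2"
      unfolding power2_norm_eq_inner
      by (simp add: inner_diff_left inner_diff_right inner_commute algebra_simps power2_eq_square)
    also have "\<dots> \<le> (norm (y i - q))\<^sup>2 - 2 * a * s i + a\<^sup>2 * B\<^sup>2"
    proof -
      have "(norm (v i))\<^sup>2 \<le> B\<^sup>2"
        using direction_bound[OF that] by (simp add: power_mono)
      then show ?thesis
        using mult_left_mono[OF progress[OF that], of "2 * a"]
          mult_left_mono[of "(norm (v i))\<^sup>2" "B\<^sup>2" "a\<^sup>2"] step_size_nonneg by simp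
    qed
    finally show ?thesis .
  qed
  have "(norm (y m - q))\<^sup>2 \<le> (norm (y 0 - q))\<^sup>2 - 2 * a * (\<Sum>i<m. s i) + m * a\<^sup>2 * B\<^sup>2" if "m \<le> n" for m
    using that
  proof (induction m)
    case (Suc m)
    then show ?case using step[of m] by (simp add: algebra_simps)
  qed simp
  then show ?thesis by simp
qed

end

end

lemma descent_sequence_eventually_below:
  fixes D \<alpha> :: "nat \<Rightarrow> real"
  assumes D_nonneg: "\<And>k. 0 \<le> D k" and \<alpha>_pos: "\<And>k. 0 < \<alpha> k" and "\<not> summable \<alpha>" and "0 < d"
    and decrease: "\<And>k. N \<le> k \<Longrightarrow> \<epsilon> \<le> D k \<Longrightarrow> D (Suc k) \<le> D k - d * \<alpha> k"
  shows "\<exists>k\<ge>N. D k < \<epsilon>"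
proof (rule ccontr)
  assume "\<not> ?thesis"
  then have above: "N \<le> k \<Longrightarrow> \<epsilon> \<le> D k" for k
    by (meson not_less)
  have partial: "D (N + m) \<le> D N - d * (\<Sum>j<m. \<alpha> (j + N))" for m
  proof (induction m)
    case (Suc m)
    then show ?case
      using decrease[of "N + m"] above[of "N + m"] by (simp add: add.commute algebra_simps)
  qed simp
  have "summable (\<lambda>j. \<alpha> (j + N))"
  proof (rule summableI_nonneg_bounded)
    show "0 \<le> \<alpha> (j + N)" for j
      using \<alpha>_pos[of "j + N"] by simp
    show "(\<Sum>j<m. \<alpha> (j + N)) \<le> D N / d" for m
      using partial[of m] D_nonneg[of "N + m"] \<open>0 < d\<close> by (simp add: field_simps)
  qed
  with \<open>\<not> summable \<alpha>\<close> show False by simp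
qed

lemma descent_sequence_stays_below:
  fixes D :: "nat \<Rightarrow> real"
  assumes "0 < \<epsilon>" and "D k\<^sub>0 < \<epsilon>"
    and nonincreasing_above: "\<And>k. k\<^sub>0 \<le> k \<Longrightarrow> \<epsilon> \<le> D k \<Longrightarrow> D (Suc k) \<le> D k"
    and small_increase: "\<And>k. k\<^sub>0 \<le> k \<Longrightarrow> D (Suc k) \<le> D k + \<epsilon>"
  shows "k\<^sub>0 \<le> k \<Longrightarrow> D k < 2 * \<epsilon>"
proof (induction k rule: dec_induct)
  case (step k)
  then show ?case
    using nonincreasing_above[of k] small_increase[of k] by (cases "\<epsilon> \<le> D k") auto
qed (use assms(1,2) in simp)

lemma perturbed_descent_tendsto_zero:
  fixes D \<phi> \<alpha> :: "nat \<Rightarrow> real"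
  assumes D_nonneg: "\<And>k. 0 \<le> D k" and \<phi>_nonneg: "\<And>k. 0 \<le> \<phi> k"
    and \<alpha>_pos: "\<And>k. 0 < \<alpha> k" and "\<alpha> \<longlonglongrightarrow> 0" and "\<not> summable \<alpha>"
    and "0 < c" and "0 \<le> K"
    and descent: "\<And>k. D (Suc k) \<le> D k - c * \<alpha> k * \<phi> k + K * (\<alpha> k)\<^sup>2"
    and gap: "\<And>\<epsilon>. 0 < \<epsilon> \<Longrightarrow> \<exists>\<delta>>0. \<forall>k. \<epsilon> \<le> D k \<longrightarrow> \<delta> \<le> \<phi> k"
  shows "D \<longlonglongrightarrow> 0"
proof (rule LIMSEQ_I)
  fix e :: real assume "0 < e"
  define \<epsilon> where "\<epsilon> = e / 2"
  then have "0 < \<epsilon>" using \<open>0 < e\<close> by simp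
  with gap obtain \<delta> where "0 < \<delta>" and \<delta>: "\<And>k. \<epsilon> \<le> D k \<Longrightarrow> \<delta> \<le> \<phi> k" by blast
  have "(\<lambda>k. K * \<alpha> k) \<longlonglongrightarrow> 0"
    using tendsto_mult_right_zero[OF \<open>\<alpha> \<longlonglongrightarrow> 0\<close>] .
  then have "eventually (\<lambda>k. \<alpha> k < 1 \<and> K * \<alpha> k < min \<epsilon> (c * \<delta> / 2)) sequentially"
    using \<open>0 < \<epsilon>\<close> \<open>0 < c\<close> \<open>0 < \<delta>\<close>
    by (intro eventually_conj order_tendstoD(2)[OF \<open>\<alpha> \<longlonglongrightarrow> 0\<close>] order_tendstoD(2)) auto
  then obtain N where N: "\<And>k. N \<le> k \<Longrightarrow> \<alpha> k < 1 \<and> K * \<alpha> k < min \<epsilon> (c * \<delta> / 2)"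
    by (auto simp: eventually_sequentially)
  have error_le: "K * (\<alpha> k)\<^sup>2 \<le> min \<epsilon> (c * \<delta> / 2 * \<alpha> k)" if "N \<le> k" for k
  proof -
    have "K * (\<alpha> k)\<^sup>2 = (K * \<alpha> k) * \<alpha> k" by (simp add: power2_eq_square)
    moreover have "(K * \<alpha> k) * \<alpha> k \<le> (K * \<alpha> k) * 1"
      using N[OF that] \<alpha>_pos[of k] \<open>0 \<le> K\<close> by (intro mult_left_mono) auto
    moreover have "(K * \<alpha> k) * \<alpha> k \<le> (c * \<delta> / 2) * \<alpha> k"
      using N[OF that] \<alpha>_pos[of k] by (intro mult_right_mono) auto
    ultimately show ?thesis using N[OF that] by auto
  qed
  have decrease: "D (Suc k) \<le> D k - c * \<delta> / 2 * \<alpha> k" if "N \<le> k" "\<epsilon> \<le> D k" for k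
  proof -
    have "c * \<alpha> k * \<delta> \<le> c * \<alpha> k * \<phi> k"
      using \<delta>[OF that(2)] \<open>0 < c\<close> \<alpha>_pos[of k] by simp
    then show ?thesis using descent[of k] error_le[OF that(1)] by (simp add: algebra_simps)
  qed
  obtain k\<^sub>0 where "N \<le> k\<^sub>0" "D k\<^sub>0 < \<epsilon>"
    using descent_sequence_eventually_below[OF D_nonneg \<alpha>_pos \<open>\<not> summable \<alpha>\<close> _ decrease]
      \<open>0 < c\<close> \<open>0 < \<delta>\<close> by auto
  have "D k < 2 * \<epsilon>" if "k\<^sub>0 \<le> k" for k
  proof (rule descent_sequence_stays_below[where k\<^sub>0 = k\<^sub>0])
    show "0 < \<epsilon>" "D k\<^sub>0 < \<epsilon>" "k\<^sub>0 \<le> k" by fact+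
  next
    fix k assume "k\<^sub>0 \<le> k"
    moreover have "0 \<le> c * \<delta> / 2 * \<alpha> k"
      using \<open>0 < c\<close> \<open>0 < \<delta>\<close> \<alpha>_pos[of k] by simp
    ultimately show "\<epsilon> \<le> D k \<Longrightarrow> D (Suc k) \<le> D k"
      using decrease[of k] \<open>N \<le> k\<^sub>0\<close> by linarith
  next
    fix k assume "k\<^sub>0 \<le> k"
    have "0 \<le> c * \<alpha> k * \<phi> k"
      using \<open>0 < c\<close> \<alpha>_pos[of k] \<phi>_nonneg[of k] by simp
    then show "D (Suc k) \<le> D k + \<epsilon>"
      using descent[of k] error_le[of k] \<open>N \<le> k\<^sub>0\<close> \<open>k\<^sub>0 \<le> k\<close> by linarith
  qed
  then show "\<exists>k\<^sub>0. \<forall>k\<ge>k\<^sub>0. norm (D k - 0) < e"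
    using D_nonneg \<epsilon>_def by auto
qed

lemma opt_val_le:
  assumes "compact X" "continuous_on X F" "u \<in> X"
  shows "opt_val X F \<le> F u"
  unfolding opt_val_def
  using assms compact_continuous_image[OF assms(2,1)]
  by (intro cInf_lower bounded_imp_bdd_below compact_imp_bounded) auto

lemma opt_val_attained:
  assumes "compact X" "X \<noteq> {}" "continuous_on X F"
  obtains u where "u \<in> X" "F u = opt_val X F"
proof -
  obtain u where u: "u \<in> X" "\<And>v. v \<in> X \<Longrightarrow> F u \<le> F v"
    using continuous_attains_inf[OF assms] by blast
  then have "opt_val X F = F u"
    unfolding opt_val_def by (intro cInf_eq_minimum) auto
  with u that show ?thesis by simp
qed

lemma opt_set_nonempty: "compact X \<Longrightarrow> X \<noteq> {} \<Longrightarrow> continuous_on X F \<Longrightarrow> opt_set X F \<noteq> {}"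
  by (rule opt_val_attained) (auto simp: opt_set_def)

lemma compact_opt_set:
  fixes F :: "'a::t2_space \<Rightarrow> real"
  assumes "compact X" "continuous_on X F"
  shows "compact (opt_set X F)"
proof -
  have "closed (opt_set X F)"
    unfolding opt_set_def
    by (rule continuous_closed_preimage_constant[OF assms(2) compact_imp_closed[OF assms(1)]])
  then have "compact (X \<inter> opt_set X F)"
    by (rule compact_Int_closed[OF assms(1)])
  then show ?thesis
    by (simp add: opt_set_def Int_absorb1)
qed

lemma opt_set_gap:
  fixes F :: "'a::heine_borel \<Rightarrow> real"
  assumes "compact X" "continuous_on X F" "0 < \<epsilon>"
  shows "\<exists>\<delta>>0. \<forall>u\<in>X. \<epsilon> \<le> infdist u (opt_set X F) \<longrightarrow> opt_val X F + \<delta> \<le> F u"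
proof -
  define A where "A = X \<inter> {u. \<epsilon> \<le> infdist u (opt_set X F)}"
  have "compact A"
    unfolding A_def
    by (intro compact_Int_closed[OF assms(1)] closed_Collect_le continuous_on_const continuous_on_infdist
        continuous_on_id)
  show ?thesis
  proof (cases "A = {}")
    case False
    obtain a where "a \<in> A" and a_min: "\<And>u. u \<in> A \<Longrightarrow> F a \<le> F u"
      using continuous_attains_inf[OF \<open>compact A\<close> False continuous_on_subset[OF assms(2)]]
      unfolding A_def by blast
    have "a \<notin> opt_set X F"
      using \<open>a \<in> A\<close> \<open>0 < \<epsilon>\<close> unfolding A_def by auto
    then have "opt_val X F < F a"
      using \<open>a \<in> A\<close> opt_val_le[OF assms(1,2)] unfolding A_def opt_set_def by force
    then show ?thesis
      using a_min unfolding A_def by (intro exI[of _ "F a - opt_val X F"]) auto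
  qed (auto simp: A_def intro: exI[of _ 1])
qed

lemma obtain_nearest_optimal_points:
  fixes F :: "'a::heine_borel \<Rightarrow> real"
  assumes "compact X" "X \<noteq> {}" "continuous_on X F"
  obtains w where "\<And>k. w k \<in> X" "\<And>k. F (w k) = opt_val X F"
    "\<And>k. infdist (z k) (opt_set X F) = dist (z k) (w k)"
proof -
  have "closed (opt_set X F)" "opt_set X F \<noteq> {}"
    using compact_opt_set[OF assms(1,3)] opt_set_nonempty[OF assms] compact_imp_closed by auto
  then have "\<forall>k. \<exists>w. w \<in> opt_set X F \<and> infdist (z k) (opt_set X F) = dist (z k) w"
    using infdist_attains_inf by blast
  then obtain w where "\<And>k. w k \<in> opt_set X F" "\<And>k. infdist (z k) (opt_set X F) = dist (z k) (w k)"
    by (auto dest!: choice)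
  with that show ?thesis
    unfolding opt_set_def by blast
qed

lemma perturbed_descent_infdist_opt_set_tendsto_zero:
  fixes z :: "nat \<Rightarrow> 'a::heine_borel" and F :: "'a \<Rightarrow> real"
  assumes X: "compact X" "X \<noteq> {}" "continuous_on X F" and z_in_X: "\<And>k. z k \<in> X"
    and \<alpha>: "\<And>k. 0 < \<alpha> k" "\<alpha> \<longlonglongrightarrow> 0" "\<not> summable \<alpha>" and "0 < c" "0 \<le> K"
    and descent: "\<And>k q. q \<in> X \<Longrightarrow>
      (dist (z (Suc k)) q)\<^sup>2 \<le> (dist (z k) q)\<^sup>2 - c * \<alpha> k * (F (z k) - F q) + K * (\<alpha> k)\<^sup>2"
  shows "(\<lambda>k. infdist (z k) (opt_set X F)) \<longlonglongrightarrow> 0"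
proof -
  define D where "D k = (infdist (z k) (opt_set X F))\<^sup>2" for k
  obtain w where wX: "\<And>k. w k \<in> X" and w_opt: "\<And>k. F (w k) = opt_val X F"
    and w_nearest: "\<And>k. infdist (z k) (opt_set X F) = dist (z k) (w k)"
    using obtain_nearest_optimal_points[OF X] by blast
  have "D \<longlonglongrightarrow> 0"
  proof (rule perturbed_descent_tendsto_zero[OF _ _ \<alpha> \<open>0 < c\<close> \<open>0 \<le> K\<close>])
    show "0 \<le> D k" for k
      by (simp add: D_def)
    show "0 \<le> F (z k) - opt_val X F" for k
      using opt_val_le[OF X(1,3) z_in_X] by simp
    show "D (Suc k) \<le> D k - c * \<alpha> k * (F (z k) - opt_val X F) + K * (\<alpha> k)\<^sup>2" for k
    proof -
      have "D (Suc k) \<le> (dist (z (Suc k)) (w k))\<^sup>2"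
        unfolding D_def using w_nearest[of "Suc k"] infdist_le[of "w k" "opt_set X F" "z (Suc k)"]
          wX w_opt infdist_nonneg by (intro power_mono) (auto simp: opt_set_def)
      also have "\<dots> \<le> (dist (z k) (w k))\<^sup>2 - c * \<alpha> k * (F (z k) - F (w k)) + K * (\<alpha> k)\<^sup>2"
        using descent[OF wX] .
      finally show ?thesis
        by (simp add: D_def w_nearest w_opt)
    qed
    show "\<exists>\<delta>>0. \<forall>k. \<epsilon> \<le> D k \<longrightarrow> \<delta> \<le> F (z k) - opt_val X F" if "0 < \<epsilon>" for \<epsilon>
    proof -
      obtain \<delta> where "0 < \<delta>"
        and \<delta>: "\<And>u. u \<in> X \<Longrightarrow> sqrt \<epsilon> \<le> infdist u (opt_set X F) \<Longrightarrow> opt_val X F + \<delta> \<le> F u"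
        using opt_set_gap[OF X(1,3), of "sqrt \<epsilon>"] \<open>0 < \<epsilon>\<close> by auto
      have "sqrt \<epsilon> \<le> infdist (z k) (opt_set X F)" if "\<epsilon> \<le> D k" for k
        using real_sqrt_le_mono[OF that] by (simp add: D_def infdist_nonneg)
      with \<delta> z_in_X \<open>0 < \<delta>\<close> show ?thesis by force
    qed
  qed
  then have "(\<lambda>k. sqrt (D k)) \<longlonglongrightarrow> 0"
    using tendsto_real_sqrt by fastforce
  then show ?thesis
    by (simp add: D_def infdist_nonneg)
qed

lemma tendsto_opt_val_if_infdist_tendsto_zero:
  fixes F :: "'a::heine_borel \<Rightarrow> real"
  assumes X: "compact X" "X \<noteq> {}" "continuous_on X F" and "\<And>k. z k \<in> X"
    and "(\<lambda>k. infdist (z k) (opt_set X F)) \<longlonglongrightarrow> 0"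
  shows "(\<lambda>k. F (z k)) \<longlonglongrightarrow> opt_val X F"
proof -
  obtain w where wX: "\<And>k. w k \<in> X" and w_opt: "\<And>k. F (w k) = opt_val X F"
    and w_nearest: "\<And>k. infdist (z k) (opt_set X F) = dist (z k) (w k)"
    using obtain_nearest_optimal_points[OF X] by blast
  have "(\<lambda>k. dist (z k) (w k)) \<longlonglongrightarrow> 0"
    using assms(5) w_nearest by simp
  with compact_uniformly_continuous[OF X(3,1)]
  have "(\<lambda>k. dist (F (z k)) (F (w k))) \<longlonglongrightarrow> 0"
    unfolding uniformly_continuous_on_sequentially using assms(4) wX by blast
  then have "(\<lambda>k. dist (F (z k)) (opt_val X F)) \<longlonglongrightarrow> 0"
    by (simp only: w_opt)
  then show ?thesis
    by (rule tendsto_dist_iff[THEN iffD2])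
qed

locale distributed_projected_subgradient =
  fixes S C \<Delta> :: nat and X :: "'a::euclidean_space set"
    and f :: "nat \<Rightarrow> 'a \<Rightarrow> real" and g :: "nat \<Rightarrow> 'a \<Rightarrow> 'a" and L :: "nat \<Rightarrow> real"
    and W :: "nat \<Rightarrow> nat \<Rightarrow> nat \<Rightarrow> nat \<Rightarrow> real" and M :: real and \<alpha> :: "nat \<Rightarrow> real"
    and x :: "nat \<Rightarrow> nat \<Rightarrow> nat \<Rightarrow> 'a" and x00 :: 'a
  assumes servers_nonempty: "1 \<le> S"
    and X: "X \<noteq> {}" "convex X" "compact X"
    and convex: "\<And>h. h < C \<Longrightarrow> convex_on UNIV (f h)"
    and gradient: "\<And>h y. h < C \<Longrightarrow> (f h has_derivative (\<lambda>v. g h y \<bullet> v)) (at y)"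
    and gradient_bound: "\<And>h y. h < C \<Longrightarrow> y \<in> X \<Longrightarrow> norm (g h y) \<le> L h"
    and weights_nonneg: "\<And>i k J h. i < \<Delta> \<Longrightarrow> J < S \<Longrightarrow> h < C \<Longrightarrow> 0 \<le> W i k J h"
    and SLC: "\<And>k h. h < C \<Longrightarrow> (\<Sum>i<\<Delta>. \<Sum>J<S. W i k J h) = M" and M_pos: "0 < M"
    and step_size_pos: "\<And>k. 0 < \<alpha> k"
    and start: "x00 \<in> X" "\<And>J. J < S \<Longrightarrow> x J 0 0 = x00"
    and local_step: "\<And>J i k. J < S \<Longrightarrow> 1 \<le> i \<Longrightarrow> i \<le> \<Delta> \<Longrightarrow>
      x J i k = closest_point X (x J (i - 1) k - \<alpha> k *\<^sub>R (\<Sum>h<C. W (i - 1) k J h *\<^sub>R g h (x J (i - 1) k)))"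
    and consensus: "\<And>I k. I < S \<Longrightarrow> x I 0 (Suc k) = (1 / real S) *\<^sub>R (\<Sum>J<S. x J \<Delta> k)"
begin

abbreviation F :: "'a \<Rightarrow> real" where "F \<equiv> total_obj C f"

definition B :: real where "B = M * (\<Sum>h<C. L h)"

text \<open>The drift of at most \<open>\<Delta> \<alpha> B\<close> from the start of a round costs \<open>2\<Delta>\<^sup>2\<alpha>\<^sup>2B\<^sup>2\<close>, the step lengths
  \<open>\<Delta>\<alpha>\<^sup>2B\<^sup>2\<close>.\<close>
definition K :: real where "K = \<Delta> * (2 * \<Delta> + 1) * B\<^sup>2"

lemma continuous_on_F: "continuous_on A F"
proof -
  have "continuous_on A (f h)" if "h < C" for h
    using has_derivative_continuous[OF gradient[OF that]] continuous_at_imp_continuous_on by blast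
  then show ?thesis
    unfolding total_obj_def by (auto intro!: continuous_on_sum)
qed

lemma L_nonneg: "h < C \<Longrightarrow> 0 \<le> L h"
  using gradient_bound[OF _ start(1)] norm_ge_zero order_trans by blast

lemma K_nonneg: "0 \<le> K"
  by (simp add: K_def)

lemma X_closed: "closed X"
  using X(3) by (rule compact_imp_closed)

lemma B_nonneg: "0 \<le> B"
  unfolding B_def using M_pos L_nonneg by (auto intro!: mult_nonneg_nonneg sum_nonneg)

lemma weight_le_M:
  assumes "i < \<Delta>" "J < S" "h < C"
  shows "W i k J h \<le> M"
proof -
  have "W i k J h \<le> (\<Sum>J'<S. W i k J' h)"
    by (rule member_le_sum) (use assms weights_nonneg in auto)
  also have "\<dots> \<le> (\<Sum>i'<\<Delta>. \<Sum>J'<S. W i' k J' h)"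
    by (rule member_le_sum[where f = "\<lambda>i'. \<Sum>J'<S. W i' k J' h"])
      (use assms weights_nonneg in \<open>auto intro!: sum_nonneg\<close>)
  finally show ?thesis
    using SLC[OF assms(3)] by simp
qed

lemma weighted_bound_le_B:
  assumes "i < \<Delta>" "J < S"
  shows "(\<Sum>h<C. W i k J h * L h) \<le> B"
proof -
  have "(\<Sum>h<C. W i k J h * L h) \<le> (\<Sum>h<C. M * L h)"
    by (rule sum_mono) (use assms weight_le_M L_nonneg in \<open>auto intro!: mult_right_mono\<close>)
  then show ?thesis
    by (simp add: B_def sum_distrib_left)
qed

lemma server_step:
  "J < S \<Longrightarrow> i < \<Delta> \<Longrightarrow>
    x J (Suc i) k = closest_point X (x J i k - \<alpha> k *\<^sub>R (\<Sum>h<C. W i k J h *\<^sub>R g h (x J i k)))"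
  using local_step[of J "Suc i" k] by simp

lemma server_iterates_in_X: "J < S \<Longrightarrow> x J 0 k \<in> X \<Longrightarrow> i \<le> \<Delta> \<Longrightarrow> x J i k \<in> X"
  by (rule projected_steps_in_set[where y = "\<lambda>i. x J i k" and n = \<Delta>, OF X(2) X_closed X(1) _ server_step])

lemma server_round_descent:
  assumes J: "J < S" and start_in_X: "x J 0 k \<in> X" and "q \<in> X"
  shows "(norm (x J \<Delta> k - q))\<^sup>2 \<le> (norm (x J 0 k - q))\<^sup>2
    - 2 * \<alpha> k * (\<Sum>i<\<Delta>. \<Sum>h<C. W i k J h * (f h (x J 0 k) - f h q)) + (\<alpha> k)\<^sup>2 * K"
proof -
  let ?y = "\<lambda>i. x J i k" and ?p = "x J 0 k"
  define v where "v i = (\<Sum>h<C. W i k J h *\<^sub>R g h (x J i k))" for i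
  have step: "\<And>i. i < \<Delta> \<Longrightarrow> ?y (Suc i) = closest_point X (?y i - \<alpha> k *\<^sub>R v i)"
    using server_step[OF J] by (simp add: v_def)
  note in_X = server_iterates_in_X[OF J start_in_X]
  have v_bound: "norm (v i) \<le> B" if "i < \<Delta>" for i
  proof -
    have "norm (v i) \<le> (\<Sum>h<C. W i k J h * L h)"
      unfolding v_def using that J in_X[of i] weights_nonneg gradient_bound
      by (intro order_trans[OF norm_sum] sum_mono) (auto intro!: mult_left_mono)
    with weighted_bound_le_B[OF that J, of k] show ?thesis by linarith
  qed
  note round_facts = X(2) X_closed X(1) start_in_X step less_imp_le[OF step_size_pos] v_bound
  have progress: "(\<Sum>h<C. W i k J h * (f h ?p - f h q)) - \<Delta> * \<alpha> k * B * B \<le> v i \<bullet> (?y i - q)"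
    if i: "i < \<Delta>" for i
  proof -
    have "real i * \<alpha> k * B \<le> \<Delta> * \<alpha> k * B"
      using i step_size_pos[of k] B_nonneg by (intro mult_right_mono) auto
    then have drift: "norm (?y i - ?p) \<le> \<Delta> * \<alpha> k * B"
      using projected_steps_drift[where y = ?y and n = \<Delta>, OF round_facts, of i] i by simp
    have "(\<Sum>h<C. W i k J h * (f h ?p - f h q)) - norm (?y i - ?p) * (\<Sum>h<C. W i k J h * L h)
        = (\<Sum>h<C. W i k J h * (f h ?p - f h q - L h * norm (?y i - ?p)))"
      by (simp add: algebra_simps sum_subtractf sum_distrib_left sum.distrib)
    also have "\<dots> \<le> (\<Sum>h<C. W i k J h * (g h (?y i) \<bullet> (?y i - q)))"
      using i J start_in_X weights_nonneg
      by (intro sum_mono mult_left_mono gradient_at_shifted_point_ge[where f = "f h" for h]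
          convex_on_above_gradient[OF convex gradient] gradient_bound) auto
    also have "\<dots> = v i \<bullet> (?y i - q)"
      by (simp add: v_def inner_sum_left)
    moreover have "norm (?y i - ?p) * (\<Sum>h<C. W i k J h * L h) \<le> \<Delta> * \<alpha> k * B * B"
      using weighted_bound_le_B[OF i J, of k] drift B_nonneg
      by (intro order_trans[OF mult_left_mono mult_right_mono]) auto
    ultimately show ?thesis
      by linarith
  qed
  have "(norm (?y \<Delta> - q))\<^sup>2 \<le> (norm (?p - q))\<^sup>2
      - 2 * \<alpha> k * (\<Sum>i<\<Delta>. (\<Sum>h<C. W i k J h * (f h ?p - f h q)) - \<Delta> * \<alpha> k * B * B)
      + \<Delta> * (\<alpha> k)\<^sup>2 * B\<^sup>2"
    using projected_steps_dist_power2_le[where y = ?y and n = \<Delta>, OF round_facts \<open>q \<in> X\<close> progress]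
    by simp
  then show ?thesis
    unfolding sum_subtractf sum_constant card_lessThan by (simp add: K_def algebra_simps power2_eq_square)
qed

lemma common_start: "J < S \<Longrightarrow> x J 0 k = x 0 0 k"
  using servers_nonempty by (cases k) (simp_all add: start(2) consensus)

lemma start_in_X: "x 0 0 k \<in> X"
proof (induction k)
  case 0
  show ?case using servers_nonempty start by simp
next
  case (Suc k)
  have "x J \<Delta> k \<in> X" if "J < S" for J
    using server_iterates_in_X[OF that] Suc common_start[OF that] by simp
  moreover have "x 0 0 (Suc k) = (\<Sum>J<S. (1 / real S) *\<^sub>R x J \<Delta> k)"
    using servers_nonempty consensus[of 0 k] by (simp add: scaleR_sum_right)
  ultimately show ?case
    using servers_nonempty convex_sum[OF _ X(2), of "{..<S}" "\<lambda>_. 1 / real S" "\<lambda>J. x J \<Delta> k"] by simp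
qed

lemma weighted_sum_SLC: "(\<Sum>J<S. \<Sum>i<\<Delta>. \<Sum>h<C. W i k J h * d h) = M * (\<Sum>h<C. d h)"
proof -
  have "(\<Sum>J<S. \<Sum>i<\<Delta>. \<Sum>h<C. W i k J h * d h) = (\<Sum>i<\<Delta>. \<Sum>J<S. \<Sum>h<C. W i k J h * d h)"
    by (rule sum.swap)
  also have "\<dots> = (\<Sum>i<\<Delta>. \<Sum>h<C. \<Sum>J<S. W i k J h * d h)"
    by (rule sum.cong[OF refl], rule sum.swap)
  also have "\<dots> = (\<Sum>h<C. \<Sum>i<\<Delta>. \<Sum>J<S. W i k J h * d h)"
    by (rule sum.swap)
  also have "\<dots> = (\<Sum>h<C. (\<Sum>i<\<Delta>. \<Sum>J<S. W i k J h) * d h)"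
    by (simp add: sum_distrib_right)
  also have "\<dots> = M * (\<Sum>h<C. d h)"
    by (simp add: SLC sum_distrib_left)
  finally show ?thesis .
qed

lemma consensus_descent:
  assumes "q \<in> X"
  shows "(dist (x 0 0 (Suc k)) q)\<^sup>2
    \<le> (dist (x 0 0 k) q)\<^sup>2 - 2 * M / S * \<alpha> k * (F (x 0 0 k) - F q) + K * (\<alpha> k)\<^sup>2"
proof -
  let ?z = "x 0 0 k"
  have S_pos: "0 < S" using servers_nonempty by simp
  have "(dist (x 0 0 (Suc k)) q)\<^sup>2 \<le> (1 / S) * (\<Sum>J<S. (norm (x J \<Delta> k - q))\<^sup>2)"
    using norm_average_minus_power2_le[OF S_pos] consensus[OF S_pos] by (simp add: dist_norm)
  also have "\<dots> \<le> (1 / S) * (\<Sum>J<S. (norm (?z - q))\<^sup>2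
      - 2 * \<alpha> k * (\<Sum>i<\<Delta>. \<Sum>h<C. W i k J h * (f h ?z - f h q)) + (\<alpha> k)\<^sup>2 * K)"
  proof (intro mult_left_mono[OF sum_mono])
    fix J assume "J \<in> {..<S}"
    then have "x J 0 k = ?z"
      by (intro common_start) simp
    then show "(norm (x J \<Delta> k - q))\<^sup>2 \<le> (norm (?z - q))\<^sup>2
      - 2 * \<alpha> k * (\<Sum>i<\<Delta>. \<Sum>h<C. W i k J h * (f h ?z - f h q)) + (\<alpha> k)\<^sup>2 * K"
      using server_round_descent[of J k q] \<open>J \<in> {..<S}\<close> start_in_X assms by simp
  qed simp
  also have "\<dots> = (norm (?z - q))\<^sup>2 + (\<alpha> k)\<^sup>2 * K
      - 2 * \<alpha> k / S * (\<Sum>J<S. \<Sum>i<\<Delta>. \<Sum>h<C. W i k J h * (f h ?z - f h q))"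
    using S_pos by (simp add: sum_subtractf sum.distrib sum_distrib_left field_simps)
  also have "\<dots> = (dist ?z q)\<^sup>2 - 2 * M / S * \<alpha> k * (F ?z - F q) + K * (\<alpha> k)\<^sup>2"
    by (simp only: weighted_sum_SLC) (simp add: total_obj_def sum_subtractf dist_norm algebra_simps)
  finally show ?thesis .
qed

end

theorem theorem3:
  fixes S C \<Delta> :: nat
    and X :: "(real^'d) set"
    and f :: "nat \<Rightarrow> real^'d \<Rightarrow> real"
    and g :: "nat \<Rightarrow> real^'d \<Rightarrow> real^'d"
    and L :: "nat \<Rightarrow> real"
    and W :: "nat \<Rightarrow> nat \<Rightarrow> nat \<Rightarrow> nat \<Rightarrow> real"
    and M :: real
    and \<alpha> :: "nat \<Rightarrow> real"
    and x :: "nat \<Rightarrow> nat \<Rightarrow> nat \<Rightarrow> real^'d"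
    and x00 :: "real^'d"
  assumes "S \<ge> 1" and "C \<ge> 1" and "\<Delta> \<ge> 1"
    and "X \<noteq> {}" and "convex X" and "compact X"
    and "\<And>h. h < C \<Longrightarrow> convex_on UNIV (f h)"
    and "\<And>h y. h < C \<Longrightarrow> (f h has_derivative (\<lambda>v. g h y \<bullet> v)) (at y)"
    and "\<And>h. h < C \<Longrightarrow> continuous_on UNIV (g h)"
    and "\<And>h y. h < C \<Longrightarrow> y \<in> X \<Longrightarrow> norm (g h y) \<le> L h"
    and "\<And>i k J h. i < \<Delta> \<Longrightarrow> J < S \<Longrightarrow> h < C \<Longrightarrow> W i k J h \<ge> 0"
    and "M > 0"
    and "\<And>k h. h < C \<Longrightarrow> (\<Sum>i<\<Delta>. \<Sum>J<S. W i k J h) = M"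
    and "\<And>k. \<alpha> k > 0"
    and "\<alpha> \<longlonglongrightarrow> 0"
    and "\<not> summable \<alpha>"
    and "x00 \<in> X"
    and "\<And>J. J < S \<Longrightarrow> x J 0 0 = x00"
    and "\<And>J i k. J < S \<Longrightarrow> 1 \<le> i \<Longrightarrow> i \<le> \<Delta> \<Longrightarrow>
           x J i k = closest_point X
             (x J (i - 1) k - \<alpha> k *\<^sub>R (\<Sum>h<C. W (i - 1) k J h *\<^sub>R g h (x J (i - 1) k)))"
    and "\<And>I k. I < S \<Longrightarrow> x I 0 (Suc k) = (1 / real S) *\<^sub>R (\<Sum>J<S. x J \<Delta> k)"
  shows "\<forall>J<S. (\<lambda>k. infdist (x J 0 k) (opt_set X (total_obj C f))) \<longlonglongrightarrow> 0
              \<and> (\<lambda>k. total_obj C f (x J 0 k)) \<longlonglongrightarrow> opt_val X (total_obj C f)"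
proof -
  interpret distributed_projected_subgradient S C \<Delta> X f g L W M \<alpha> x x00
    by unfold_locales (fact assms)+
  have "(\<lambda>k. infdist (x 0 0 k) (opt_set X F)) \<longlonglongrightarrow> 0"
    using servers_nonempty M_pos
    by (intro perturbed_descent_infdist_opt_set_tendsto_zero[OF X(3,1) continuous_on_F start_in_X
        step_size_pos assms(15,16) _ K_nonneg consensus_descent]) simp_all
  moreover from this have "(\<lambda>k. F (x 0 0 k)) \<longlonglongrightarrow> opt_val X F"
    by (rule tendsto_opt_val_if_infdist_tendsto_zero[OF X(3,1) continuous_on_F start_in_X])
  moreover have "x J 0 = x 0 0" if "J < S" for J
    using common_start[OF that] by (intro ext)
  ultimately show ?thesis
    by (metis (no_types))
qed

end
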